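(* Let $D$ be a $3$-dicritical digraph on $n$ vertices that is isomorphic to neither $\overleftrightarrow{K_3}$ nor $\vec{W_3}$. Then $D$ has at most $\binom{n}{2}+\frac{2}{3}n$ arcs.
   Context: Digraphs are finite, with no loops and no parallel arcs (digons, i.e. pairs $uv,vu$, are allowed). A $2$-dicolouring of $D$ is a map $V(D)\to\{1,2\}$ such that each colour class induces an acyclic subdigraph (a digon is a directed cycle). $D$ is $3$-dicritical if $D$ has no $2$-dicolouring but every proper subdigraph has one. $\overleftrightarrow{K_3}$ is the digraph on 3 vertices with all 6 arcs. $\vec{W_3}$ consists of a directed triangle $a\to b\to c\to a$ and a vertex $r$ joined by a digon to each of $a,b,c$. *)

theory Defs
  imports Complex_Main
begin

text \<open>Parallel arcs are excluded automatically since A is a set of pairs;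
  digons (u,v),(v,u) are allowed.\<close>

definition is_digraph :: "'a set \<Rightarrow> ('a \<times> 'a) set \<Rightarrow> bool" where
  "is_digraph V A \<longleftrightarrow> finite V \<and> A \<subseteq> V \<times> V \<and> (\<forall>v. (v, v) \<notin> A)"

definition induced_arcs :: "('a \<times> 'a) set \<Rightarrow> 'a set \<Rightarrow> ('a \<times> 'a) set" where
  "induced_arcs A S = A \<inter> (S \<times> S)"

text \<open>A 2-dicolouring: a map V \<rightarrow> {1,2} such that each colour class induces an
  acyclic subdigraph (a digon counts as a directed cycle).\<close>
definition is_2_dicolouring :: "'a set \<Rightarrow> ('a \<times> 'a) set \<Rightarrow> ('a \<Rightarrow> nat) \<Rightarrow> bool" where
  "is_2_dicolouring V A c \<longleftrightarrow> c ` V \<subseteq> {1, 2} \<and>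
     (\<forall>i \<in> {1, 2::nat}. acyclic (induced_arcs A {v \<in> V. c v = i}))"

definition two_dicolourable :: "'a set \<Rightarrow> ('a \<times> 'a) set \<Rightarrow> bool" where
  "two_dicolourable V A \<longleftrightarrow> (\<exists>c. is_2_dicolouring V A c)"

definition is_subdigraph :: "'a set \<Rightarrow> ('a \<times> 'a) set \<Rightarrow> 'a set \<Rightarrow> ('a \<times> 'a) set \<Rightarrow> bool" where
  "is_subdigraph V' A' V A \<longleftrightarrow> V' \<subseteq> V \<and> A' \<subseteq> A \<and> A' \<subseteq> V' \<times> V'"

definition three_dicritical :: "'a set \<Rightarrow> ('a \<times> 'a) set \<Rightarrow> bool" where
  "three_dicritical V A \<longleftrightarrow> is_digraph V A \<and> \<not> two_dicolourable V A \<and>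
     (\<forall>V' A'. is_subdigraph V' A' V A \<and> (V', A') \<noteq> (V, A) \<longrightarrow> two_dicolourable V' A')"

definition digraph_iso :: "'a set \<Rightarrow> ('a \<times> 'a) set \<Rightarrow> 'b set \<Rightarrow> ('b \<times> 'b) set \<Rightarrow> bool" where
  "digraph_iso V A W B \<longleftrightarrow> (\<exists>f. bij_betw f V W \<and>
     (\<forall>u \<in> V. \<forall>v \<in> V. (u, v) \<in> A \<longleftrightarrow> (f u, f v) \<in> B))"

definition K3_V :: "nat set" where "K3_V = {0, 1, 2}"
definition K3_A :: "(nat \<times> nat) set" where "K3_A = {(u, v). u \<in> K3_V \<and> v \<in> K3_V \<and> u \<noteq> v}"

definition W3_V :: "nat set" where "W3_V = {0, 1, 2, 3}"
definition W3_A :: "(nat \<times> nat) set" where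
  "W3_A = {(0, 1), (1, 2), (2, 0), (3, 0), (0, 3), (3, 1), (1, 3), (3, 2), (2, 3)}"

end

theory Submission
  imports Defs
begin

text \<open>Deleting an arc \<open>uv\<close> of a 3-dicritical digraph \<open>D\<close> leaves a 2-dicolouring, which must be
  monochromatic on \<open>uv\<close> and properly 2-colours all digons other than \<open>uv\<close>. So in the graph \<open>G\<close>
  formed by the digons every edge is the only monochromatic edge of some 2-colouring.

  If \<open>G\<close> is not bipartite, no colouring of \<open>D - uv\<close> can be proper on \<open>G\<close>, so every arc lies in a
  digon; then every \<open>D - v\<close> is a bipartite graph, and averaging over \<open>v\<close> bounds the arcs.

  If \<open>G\<close> is bipartite it is a forest, and each component splits into two sides, on which all
  proper 2-colourings of \<open>G\<close> are constant resp. swapped. A non-digon arc gets a colouring of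
  \<open>D - uv\<close> that is proper on \<open>G\<close> and constant on \<open>uv\<close>; hence arcs between the two sides of a
  component are digons, arcs inside a side span no transitive triangle, and a directed triangle
  inside a side would contain every non-digon arc, leaving at most \<open>2n + 1\<close> arcs or \<open>W\<^sub>3\<close>.
  Otherwise every side spans a triangle-free oriented graph, a component with \<open>k\<close> vertices spans
  at most \<open>k (3k + 1) / 6\<close> arcs, arcs between components form an oriented graph, and averaging over
  components gives \<open>n (3n + 1) / 6 = C(n,2) + 2n/3\<close>.\<close>

section \<open>Oriented graphs and bipartite graphs\<close>

lemma card_Int_sym_le_half:
  assumes "finite W" "sym W" "asym R"
  shows "2 * card (R \<inter> W) \<le> card W"
proof -
  let ?S = "R \<inter> W"
  have "?S \<union> ?S\<inverse> \<subseteq> W" "?S \<inter> ?S\<inverse> = {}"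
    using assms(2,3) by (auto simp: sym_def asym_iff)
  moreover have "finite ?S" using assms(1) by simp
  ultimately have "card ?S + card (?S\<inverse>) \<le> card W"
    using assms(1) by (metis card_Un_disjoint card_mono finite_converse)
  then show ?thesis by simp
qed

lemma card_offdiag: "finite S \<Longrightarrow> card (S \<times> S - Id) = card S * card S - card S"
proof -
  assume "finite S"
  have "S \<times> S \<inter> Id = (\<lambda>x. (x, x)) ` S" by auto
  moreover have "card ((\<lambda>x. (x, x)) ` S) = card S" by (simp add: card_image inj_on_def)
  ultimately show ?thesis
    using \<open>finite S\<close> by (simp add: Diff_Int2 card_Diff_subset_Int card_cartesian_product)
qed

lemma card_asym_le:
  assumes "finite S" "R \<subseteq> S \<times> S" "asym R"
  shows "2 * card R \<le> card S * card S - card S"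
proof -
  have "R = R \<inter> (S \<times> S - Id)" using assms(2,3) by (auto dest: asymD)
  moreover have "sym (S \<times> S - Id)" by (auto simp: sym_def)
  then have "2 * card (R \<inter> (S \<times> S - Id)) \<le> card (S \<times> S - Id)"
    using assms(1,3) by (intro card_Int_sym_le_half) auto
  with \<open>R = R \<inter> (S \<times> S - Id)\<close> show ?thesis
    using card_offdiag[OF assms(1)] by simp
qed

lemma card_asym_delete_independent_le:
  assumes "finite S" "R \<subseteq> S \<times> S" "asym R" "Restr R T = {}"
  shows "card R \<le> card (Restr R (S - T)) + card (T \<inter> S) * card (S - T)"
proof -
  define W where "W = (T \<inter> S) \<times> (S - T) \<union> (S - T) \<times> (T \<inter> S)"
  have "finite W" using assms(1) unfolding W_def by blast
  have "R \<subseteq> Restr R (S - T) \<union> (R \<inter> W)"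
    using assms(2,4) unfolding W_def by auto
  then have "card R \<le> card (Restr R (S - T) \<union> (R \<inter> W))"
    using assms(1) \<open>finite W\<close> by (intro card_mono) auto
  also have "\<dots> \<le> card (Restr R (S - T)) + card (R \<inter> W)"
    by (rule card_Un_le)
  finally have "card R \<le> card (Restr R (S - T)) + card (R \<inter> W)" .
  moreover have "2 * card (R \<inter> W) \<le> card W"
    using \<open>finite W\<close> assms(3) by (intro card_Int_sym_le_half) (auto simp: W_def sym_def)
  moreover have "card W \<le> 2 * (card (T \<inter> S) * card (S - T))"
    unfolding W_def by (rule order_trans[OF card_Un_le]) (simp add: card_cartesian_product)
  ultimately show ?thesis by linarith
qed

lemma card_triangle_free_asym_le:
  assumes "finite S" "R \<subseteq> S \<times> S" "asym R"
    and "\<And>x y z. x \<noteq> y \<Longrightarrow> y \<noteq> z \<Longrightarrow> x \<noteq> z \<Longrightarrow>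
      (x, y) \<in> R \<union> R\<inverse> \<Longrightarrow> (y, z) \<in> R \<union> R\<inverse> \<Longrightarrow> (x, z) \<in> R \<union> R\<inverse> \<Longrightarrow> False"
  shows "6 * card R + 5 * card S \<le> 3 * card S * card S + 4"
  using assms
proof (induction "card S" arbitrary: S R rule: less_induct)
  case less
  show ?case
  proof (cases "\<exists>p\<in>S. \<exists>q\<in>S. p \<noteq> q \<and> (p, q) \<notin> R \<union> R\<inverse>")
    case True
    then obtain p q where pq: "p \<in> S" "q \<in> S" "p \<noteq> q" "(p, q) \<notin> R \<union> R\<inverse>" by blast
    let ?S' = "S - {p, q}"
    have "card {p, q} \<le> card S" using pq less.prems(1) by (intro card_mono) auto
    then have card_S: "card S = card ?S' + 2"
      using pq less.prems(1) by (simp add: card_Diff_subset)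
    have card_T: "card ({p, q} \<inter> S) = 2" using pq by (simp add: Int_absorb2)
    have "Restr R {p, q} = {}"
      using pq(4) less.prems(3) by (auto dest: asymD)
    then have "card R \<le> card (Restr R ?S') + 2 * card ?S'"
      using card_asym_delete_independent_le[OF less.prems(1-3), of "{p, q}"] card_T by simp
    moreover have "6 * card (Restr R ?S') + 5 * card ?S' \<le> 3 * card ?S' * card ?S' + 4"
    proof (rule less.hyps)
      show "card ?S' < card S" using card_S by simp
      show "asym (Restr R ?S')" using less.prems(3) by (simp add: asym_iff)
    qed (use less.prems(1,4) in auto)
    ultimately show ?thesis using card_S by (simp add: algebra_simps)
  next
    case False
    have "card S \<le> 2"
    proof (rule ccontr)
      assume "\<not> card S \<le> 2"
      then obtain T where "T \<subseteq> S" "card T = 3"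
        by (metis not_less_eq_eq numeral_2_eq_2 numeral_3_eq_3 obtain_subset_with_card_n)
      then obtain x y z where "x \<in> S" "y \<in> S" "z \<in> S" "x \<noteq> y" "y \<noteq> z" "x \<noteq> z"
        by (auto simp: card_3_iff)
      then show False using False less.prems(4) by blast
    qed
    moreover have "2 * card R \<le> card S * card S - card S"
      using card_asym_le less.prems(1-3) by blast
    ultimately show ?thesis by (auto simp: le_Suc_eq numeral_2_eq_2)
  qed
qed

lemma sum_eq_sum_block_averages:
  fixes g :: "'a \<Rightarrow> real"
  assumes "finite V" "\<And>x. x \<in> V \<Longrightarrow> x \<in> K x" "\<And>x. x \<in> V \<Longrightarrow> K x \<subseteq> V"
    and "\<And>x y. x \<in> V \<Longrightarrow> y \<in> K x \<Longrightarrow> K y = K x"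
  shows "(\<Sum>x\<in>V. g x) = (\<Sum>x\<in>V. (\<Sum>y\<in>K x. g y) / card (K x))"
proof -
  have blocks: "{x \<in> V. y \<in> K x} = K y" if "y \<in> V" for y
  proof
    show "{x \<in> V. y \<in> K x} \<subseteq> K y"
    proof
      fix x assume "x \<in> {x \<in> V. y \<in> K x}"
      then have "x \<in> V" "K y = K x" using assms(4) by blast+
      then show "x \<in> K y" using assms(2) by simp
    qed
    show "K y \<subseteq> {x \<in> V. y \<in> K x}"
    proof
      fix x assume "x \<in> K y"
      then have "x \<in> V" "K x = K y" using assms(3)[OF that] assms(4)[OF that] by auto
      then show "x \<in> {x \<in> V. y \<in> K x}" using assms(2) that by simp
    qed
  qed
  have "(\<Sum>x\<in>V. (\<Sum>y\<in>K x. g y) / card (K x)) = (\<Sum>x\<in>V. \<Sum>y\<in>{y \<in> V. y \<in> K x}. g y / card (K y))"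
  proof (intro sum.cong refl)
    fix x assume "x \<in> V"
    then have "{y \<in> V. y \<in> K x} = K x" using assms(3) by blast
    moreover have "(\<Sum>y\<in>K x. g y) / card (K x) = (\<Sum>y\<in>K x. g y / card (K y))"
      unfolding sum_divide_distrib
      by (intro sum.cong refl) (simp only: assms(4)[OF \<open>x \<in> V\<close>])
    ultimately show "(\<Sum>y\<in>K x. g y) / card (K x) = (\<Sum>y\<in>{y \<in> V. y \<in> K x}. g y / card (K y))"
      by simp
  qed
  also have "\<dots> = (\<Sum>y\<in>V. \<Sum>x\<in>{x \<in> V. y \<in> K x}. g y / card (K y))"
    by (rule sum.swap_restrict[OF assms(1) assms(1)])
  also have "\<dots> = (\<Sum>y\<in>V. g y)"
  proof (intro sum.cong refl)
    fix y assume "y \<in> V"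
    have "finite (K y)" using assms(1,3) \<open>y \<in> V\<close> finite_subset by blast
    then have "card (K y) \<noteq> 0" using assms(2) \<open>y \<in> V\<close> by auto
    then show "(\<Sum>x\<in>{x \<in> V. y \<in> K x}. g y / card (K y)) = g y"
      using blocks[OF \<open>y \<in> V\<close>] by simp
  qed
  finally show ?thesis by simp
qed

lemma sum_card_Restr_delete:
  assumes "finite V" "D \<subseteq> V \<times> V" "D \<inter> Id = {}"
  shows "(\<Sum>v\<in>V. card (Restr D (V - {v}))) = (card V - 2) * card D"
proof -
  have "finite D" using assms(1,2) finite_subset by blast
  have "Restr D (V - {v}) = {p \<in> D. v \<notin> {fst p, snd p}}" for v
    using assms(2) by auto
  then have "(\<Sum>v\<in>V. card (Restr D (V - {v}))) = (\<Sum>v\<in>V. \<Sum>p\<in>{p \<in> D. v \<notin> {fst p, snd p}}. 1)"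
    by simp
  also have "\<dots> = (\<Sum>p\<in>D. \<Sum>v\<in>{v \<in> V. v \<notin> {fst p, snd p}}. 1)"
    using assms(1) \<open>finite D\<close> by (rule sum.swap_restrict)
  also have "\<dots> = (\<Sum>p\<in>D. card V - 2)"
  proof (intro sum.cong refl)
    fix p assume "p \<in> D"
    obtain a b where "p = (a, b)" by fastforce
    with \<open>p \<in> D\<close> assms(2,3) have "a \<in> V" "b \<in> V" "a \<noteq> b" by auto
    moreover have "{v \<in> V. v \<notin> {fst p, snd p}} = V - {a, b}" using \<open>p = (a, b)\<close> by auto
    ultimately show "(\<Sum>v\<in>{v \<in> V. v \<notin> {fst p, snd p}}. 1) = card V - 2"
      using assms(1) by (simp add: card_Diff_subset)
  qed
  finally show ?thesis by simp
qed

definition bicolourings :: "('a \<times> 'a) set \<Rightarrow> ('a \<Rightarrow> bool) set" where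
  "bicolourings E = {f. \<forall>(x, y) \<in> E. f x \<noteq> f y}"

lemma bicolourings_antimono: "E \<subseteq> E' \<Longrightarrow> bicolourings E' \<subseteq> bicolourings E"
  unfolding bicolourings_def by blast

lemma card_le_card_Restr_agree_disagree:
  assumes "finite K" "E \<subseteq> K \<times> K" "f \<in> bicolourings E" "h \<in> bicolourings (E - {(u, v), (v, u)})"
  shows "card E \<le> card (Restr E {x \<in> K. h x = f x}) + card (Restr E {x \<in> K. h x \<noteq> f x}) + 2"
proof -
  define K0 K1 where "K0 = {x \<in> K. h x = f x}" and "K1 = {x \<in> K. h x \<noteq> f x}"
  have "(a, b) \<in> Restr E K0 \<union> Restr E K1 \<union> {(u, v), (v, u)}" if "(a, b) \<in> E" for a b
  proof (cases "(a, b) \<in> {(u, v), (v, u)}")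
    case False
    then have "h a \<noteq> h b" "f a \<noteq> f b" using assms(3,4) that unfolding bicolourings_def by auto
    moreover have "a \<in> K" "b \<in> K" using that assms(2) by auto
    ultimately show ?thesis using that unfolding K0_def K1_def by auto
  qed auto
  then have "E \<subseteq> Restr E K0 \<union> Restr E K1 \<union> {(u, v), (v, u)}" by (rule subrelI)
  moreover have "finite E" using assms(1,2) finite_subset by blast
  then have "finite (Restr E K0 \<union> Restr E K1 \<union> {(u, v), (v, u)})" by simp
  ultimately have "card E \<le> card (Restr E K0 \<union> Restr E K1 \<union> {(u, v), (v, u)})"
    by (rule card_mono[rotated])
  also have "\<dots> \<le> card (Restr E K0) + card (Restr E K1) + card {(u, v), (v, u)}"
    by (rule order_trans[OF card_Un_le add_right_mono[OF card_Un_le]])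
  finally show ?thesis unfolding K0_def K1_def by (simp add: card_insert_if split: if_splits)
qed

text \<open>The graph is a forest: comparing \<open>h\<close> with a proper colouring splits the vertices into two
  parts that only the edge \<open>uv\<close> joins.\<close>
lemma card_edge_critical_bipartite_le:
  assumes "finite K" "K \<noteq> {}" "E \<subseteq> K \<times> K" "sym E" "bicolourings E \<noteq> {}"
    and "\<And>u v. (u, v) \<in> E \<Longrightarrow> \<exists>h \<in> bicolourings (E - {(u, v), (v, u)}). h u = h v"
  shows "card E + 2 \<le> 2 * card K"
  using assms
proof (induction "card K" arbitrary: K E rule: less_induct)
  case less
  show ?case
  proof (cases "E = {}")
    case True
    moreover have "card K > 0" using less.prems(1,2) by (simp add: card_gt_0_iff)
    ultimately show ?thesis by simp
  next
    case False
    then obtain u v where uv: "(u, v) \<in> E" by auto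
    obtain f where f: "f \<in> bicolourings E" using less.prems(5) by blast
    obtain h where h: "h \<in> bicolourings (E - {(u, v), (v, u)})" "h u = h v"
      using less.prems(6)[OF uv] by blast
    define K0 K1 where "K0 = {x \<in> K. h x = f x}" and "K1 = {x \<in> K. h x \<noteq> f x}"
    have "f u \<noteq> f v" using f uv unfolding bicolourings_def by auto
    then have K01: "K0 \<subset> K" "K1 \<subset> K" "K0 \<noteq> {}" "K1 \<noteq> {}" "K = K0 \<union> K1" "K0 \<inter> K1 = {}"
      using uv h(2) less.prems(3) unfolding K0_def K1_def by auto
    have card_E: "card E \<le> card (Restr E K0) + card (Restr E K1) + 2"
      unfolding K0_def K1_def by (rule card_le_card_Restr_agree_disagree[OF less.prems(1,3) f h(1)])
    have IH: "card (Restr E L) + 2 \<le> 2 * card L" if "L \<subset> K" "L \<noteq> {}" for L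
    proof (rule less.hyps)
      show "card L < card K" using \<open>L \<subset> K\<close> less.prems(1) by (rule psubset_card_mono[rotated])
      show "bicolourings (Restr E L) \<noteq> {}"
        using less.prems(5) bicolourings_antimono[of "Restr E L" E] by blast
      show "\<exists>h \<in> bicolourings (Restr E L - {(a, b), (b, a)}). h a = h b" if "(a, b) \<in> Restr E L" for a b
        using less.prems(6)[of a b] that bicolourings_antimono[of "Restr E L - {(a, b), (b, a)}"]
        by blast
      show "finite L" using \<open>L \<subset> K\<close> less.prems(1) finite_subset by blast
      show "sym (Restr E L)" using less.prems(4) by (auto simp: sym_def)
    qed (use that in auto)
    have "card K = card K0 + card K1"
      using K01(5,6) less.prems(1) by (simp add: card_Un_disjoint)
    with IH[OF K01(1,3)] IH[OF K01(2,4)] card_E show ?thesis by linarith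
  qed
qed

section \<open>Colourings of 3-dicritical digraphs\<close>

lemma three_dicriticalD:
  assumes "three_dicritical V A"
  shows "finite V" "A \<subseteq> V \<times> V" "(v, v) \<notin> A" "\<not> two_dicolourable V A"
  using assms unfolding three_dicritical_def is_digraph_def by auto

lemma three_dicritical_delete_arc:
  assumes "three_dicritical V A" "a \<in> A"
  shows "two_dicolourable V (A - {a})"
proof -
  have "is_subdigraph V (A - {a}) V A" "(V, A - {a}) \<noteq> (V, A)"
    using three_dicriticalD(2)[OF assms(1)] assms(2) unfolding is_subdigraph_def by auto
  then show ?thesis using assms(1) unfolding three_dicritical_def by blast
qed

lemma three_dicritical_delete_vertex:
  assumes "three_dicritical V A" "v \<in> V"
  shows "two_dicolourable (V - {v}) (Restr A (V - {v}))"
proof -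
  have "is_subdigraph (V - {v}) (Restr A (V - {v})) V A" "(V - {v}, Restr A (V - {v})) \<noteq> (V, A)"
    using assms(2) unfolding is_subdigraph_def by auto
  then show ?thesis using assms(1) unfolding three_dicritical_def by blast
qed

lemma is_2_dicolouring_range:
  "is_2_dicolouring V A c \<Longrightarrow> x \<in> V \<Longrightarrow> c x = 1 \<or> c x = 2"
  unfolding is_2_dicolouring_def by auto

lemma is_2_dicolouring_digon:
  assumes "is_2_dicolouring V A c" "(x, y) \<in> A" "(y, x) \<in> A" "x \<in> V" "y \<in> V"
  shows "c x \<noteq> c y"
proof
  assume "c x = c y"
  then have "(x, y) \<in> induced_arcs A {v \<in> V. c v = c x}" "(y, x) \<in> induced_arcs A {v \<in> V. c v = c x}"
    using assms(2-5) unfolding induced_arcs_def by auto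
  then have "\<not> acyclic (induced_arcs A {v \<in> V. c v = c x})"
    unfolding acyclic_def by (meson trancl.simps)
  moreover have "c x \<in> {1, 2}" using is_2_dicolouring_range[OF assms(1,4)] by auto
  ultimately show False using assms(1) unfolding is_2_dicolouring_def by blast
qed

lemma is_2_dicolouring_insert_bichromatic:
  assumes "is_2_dicolouring V A c" "c x \<noteq> c y"
  shows "is_2_dicolouring V (insert (x, y) A) c"
proof -
  have "induced_arcs (insert (x, y) A) {v \<in> V. c v = i} = induced_arcs A {v \<in> V. c v = i}" for i
    using assms(2) unfolding induced_arcs_def by auto
  then show ?thesis using assms(1) unfolding is_2_dicolouring_def by simp
qed

lemma is_2_dicolouring_insert_shortcut:
  assumes "is_2_dicolouring V A c" "(x, z) \<in> A" "(z, y) \<in> A" "c x = c z" "c z = c y"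
    "x \<in> V" "y \<in> V" "z \<in> V"
  shows "is_2_dicolouring V (insert (x, y) A) c"
  unfolding is_2_dicolouring_def
proof (intro conjI ballI)
  show "c ` V \<subseteq> {1, 2}" using assms(1) unfolding is_2_dicolouring_def by simp
  fix i :: nat assume "i \<in> {1, 2}"
  let ?R = "induced_arcs A {v \<in> V. c v = i}"
  have "acyclic ?R" using assms(1) \<open>i \<in> {1, 2}\<close> unfolding is_2_dicolouring_def by blast
  show "acyclic (induced_arcs (insert (x, y) A) {v \<in> V. c v = i})"
  proof (cases "c x = i")
    case True
    then have "(x, z) \<in> ?R" "(z, y) \<in> ?R" using assms(2-8) unfolding induced_arcs_def by auto
    then have "(x, y) \<in> ?R\<^sup>+" by (meson r_into_trancl trancl_trans)
    then have "(y, x) \<notin> ?R\<^sup>*"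
      using \<open>acyclic ?R\<close> unfolding acyclic_def by (meson rtrancl_trancl_trancl)
    then have "acyclic (insert (x, y) ?R)" using \<open>acyclic ?R\<close> by (simp add: acyclic_insert)
    moreover have "induced_arcs (insert (x, y) A) {v \<in> V. c v = i} \<subseteq> insert (x, y) ?R"
      unfolding induced_arcs_def by auto
    ultimately show ?thesis by (rule acyclic_subset)
  next
    case False
    then have "induced_arcs (insert (x, y) A) {v \<in> V. c v = i} = ?R"
      unfolding induced_arcs_def by auto
    with \<open>acyclic ?R\<close> show ?thesis by simp
  qed
qed

section \<open>The digon graph\<close>

definition digons :: "('a \<times> 'a) set \<Rightarrow> ('a \<times> 'a) set" where
  "digons A = A \<inter> A\<inverse>"

text \<open>When the digon graph is bipartite, the vertices on the same or on the opposite side of \<open>x\<close>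
  form its component; when it is not, both relations hold vacuously.\<close>
definition same_side :: "('a \<times> 'a) set \<Rightarrow> 'a \<Rightarrow> 'a \<Rightarrow> bool" where
  "same_side A x y \<longleftrightarrow> (\<forall>f \<in> bicolourings (digons A). f x = f y)"

definition opposite_sides :: "('a \<times> 'a) set \<Rightarrow> 'a \<Rightarrow> 'a \<Rightarrow> bool" where
  "opposite_sides A x y \<longleftrightarrow> (\<forall>f \<in> bicolourings (digons A). f x \<noteq> f y)"

lemma same_side_refl [simp]: "same_side A x x"
  unfolding same_side_def by simp

lemma same_side_iff:
  assumes "same_side A x y"
  shows "same_side A x z \<longleftrightarrow> same_side A y z" "opposite_sides A x z \<longleftrightarrow> opposite_sides A y z"
proof -
  have xy: "f x \<longleftrightarrow> f y" if "f \<in> bicolourings (digons A)" for f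
    using assms that unfolding same_side_def by blast
  show "same_side A x z \<longleftrightarrow> same_side A y z" "opposite_sides A x z \<longleftrightarrow> opposite_sides A y z"
    unfolding same_side_def opposite_sides_def by (intro ball_cong refl; use xy in blast)+
qed

lemma opposite_sides_iff:
  assumes "opposite_sides A x y"
  shows "same_side A x z \<longleftrightarrow> opposite_sides A y z" "opposite_sides A x z \<longleftrightarrow> same_side A y z"
proof -
  have xy: "f x \<longleftrightarrow> \<not> f y" if "f \<in> bicolourings (digons A)" for f
    using assms that unfolding opposite_sides_def by blast
  show "same_side A x z \<longleftrightarrow> opposite_sides A y z" "opposite_sides A x z \<longleftrightarrow> same_side A y z"
    unfolding same_side_def opposite_sides_def by (intro ball_cong refl; use xy in blast)+
qed

lemma opposite_sides_if_digon: "(x, y) \<in> digons A \<Longrightarrow> opposite_sides A x y"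
  unfolding opposite_sides_def bicolourings_def by auto

lemma not_opposite_sides_if_same_side:
  assumes "bicolourings (digons A) \<noteq> {}" "same_side A x y"
  shows "\<not> opposite_sides A x y"
proof
  assume "opposite_sides A x y"
  obtain f where f: "f \<in> bicolourings (digons A)" using assms(1) by blast
  show False
    using bspec[OF assms(2)[unfolded same_side_def] f]
      bspec[OF \<open>opposite_sides A x y\<close>[unfolded opposite_sides_def] f] by simp
qed

lemma not_digon_if_same_side:
  assumes "bicolourings (digons A) \<noteq> {}" "same_side A x y"
  shows "(x, y) \<notin> digons A"
proof
  assume "(x, y) \<in> digons A"
  then have "opposite_sides A x y" by (rule opposite_sides_if_digon)
  with not_opposite_sides_if_same_side[OF assms] show False by contradiction
qed

lemma same_side_colour_eq:
  assumes "same_side A x y" "(\<lambda>v. c v = 1) \<in> bicolourings (digons A)"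
    and "is_2_dicolouring V B c" "x \<in> V" "y \<in> V"
  shows "c x = c y"
proof -
  have "(c x = 1) = (c y = 1)" using bspec[OF assms(1)[unfolded same_side_def] assms(2)] by simp
  then show ?thesis
    using is_2_dicolouring_range[OF assms(3,4)] is_2_dicolouring_range[OF assms(3,5)] by auto
qed

lemma arc_deletion_colouring:
  assumes "three_dicritical V A" "(x, y) \<in> A"
  obtains c where "is_2_dicolouring V (A - {(x, y)}) c" "c x = c y"
    "(\<lambda>v. c v = 1) \<in> bicolourings (digons A - {(x, y), (y, x)})"
proof -
  obtain c where c: "is_2_dicolouring V (A - {(x, y)}) c"
    using three_dicritical_delete_arc[OF assms] unfolding two_dicolourable_def by blast
  have "c x = c y"
  proof (rule ccontr)
    assume "c x \<noteq> c y"
    then have "is_2_dicolouring V (insert (x, y) (A - {(x, y)})) c"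
      by (rule is_2_dicolouring_insert_bichromatic[OF c])
    then have "is_2_dicolouring V A c" by (simp only: insert_Diff[OF assms(2)])
    then show False using three_dicriticalD(4)[OF assms(1)] unfolding two_dicolourable_def by blast
  qed
  moreover have "(c a = 1) \<noteq> (c b = 1)" if "(a, b) \<in> digons A - {(x, y), (y, x)}" for a b
  proof -
    have "(a, b) \<in> A - {(x, y)}" "(b, a) \<in> A - {(x, y)}" "a \<in> V" "b \<in> V"
      using that three_dicriticalD(2)[OF assms(1)] unfolding digons_def by auto
    then have "c a \<noteq> c b" by (rule is_2_dicolouring_digon[OF c])
    then show ?thesis
      using is_2_dicolouring_range[OF c \<open>a \<in> V\<close>] is_2_dicolouring_range[OF c \<open>b \<in> V\<close>] by auto
  qed
  ultimately show ?thesis using that[OF c] unfolding bicolourings_def by blast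
qed

lemma simple_arc_deletion_colouring:
  assumes "three_dicritical V A" "(x, y) \<in> A" "(y, x) \<notin> A"
  obtains c where "is_2_dicolouring V (A - {(x, y)}) c" "c x = c y"
    "(\<lambda>v. c v = 1) \<in> bicolourings (digons A)"
proof -
  obtain c where "is_2_dicolouring V (A - {(x, y)}) c" "c x = c y"
    "(\<lambda>v. c v = 1) \<in> bicolourings (digons A - {(x, y), (y, x)})"
    using arc_deletion_colouring[OF assms(1,2)] by blast
  moreover have "digons A - {(x, y), (y, x)} = digons A" using assms(3) unfolding digons_def by auto
  ultimately show ?thesis using that by simp
qed

lemma digon_if_opposite_sides:
  assumes "three_dicritical V A" "(x, y) \<in> A" "opposite_sides A x y"
  shows "(x, y) \<in> digons A"
proof (rule ccontr)
  assume "(x, y) \<notin> digons A"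
  then have "(y, x) \<notin> A" using assms(2) unfolding digons_def by auto
  then obtain c :: "'a \<Rightarrow> nat" where c: "c x = c y" "(\<lambda>v. c v = 1) \<in> bicolourings (digons A)"
    using simple_arc_deletion_colouring[OF assms(1,2)] by blast
  then show False using bspec[OF assms(3)[unfolded opposite_sides_def] c(2)] by simp
qed

lemma digons_eq_if_not_bipartite:
  assumes "three_dicritical V A" "bicolourings (digons A) = {}"
  shows "digons A = A"
proof -
  have "(x, y) \<in> digons A" if "(x, y) \<in> A" for x y
    using digon_if_opposite_sides[OF assms(1) that] assms(2) unfolding opposite_sides_def by blast
  then show ?thesis unfolding digons_def by auto
qed

lemma card_digons_le:
  assumes "three_dicritical V A" "bicolourings (digons A) \<noteq> {}" "K \<subseteq> V" "K \<noteq> {}"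
  shows "card (Restr (digons A) K) + 2 \<le> 2 * card K"
proof (rule card_edge_critical_bipartite_le)
  show "finite K" using three_dicriticalD(1)[OF assms(1)] assms(3) finite_subset by blast
  show "sym (Restr (digons A) K)" unfolding digons_def sym_def by auto
  show "bicolourings (Restr (digons A) K) \<noteq> {}"
    using assms(2) bicolourings_antimono[of "Restr (digons A) K" "digons A"] by blast
  fix u v assume "(u, v) \<in> Restr (digons A) K"
  then have "(u, v) \<in> A" unfolding digons_def by simp
  then obtain c where "is_2_dicolouring V (A - {(u, v)}) c" "c u = c v"
    "(\<lambda>w. c w = 1) \<in> bicolourings (digons A - {(u, v), (v, u)})"
    by (rule arc_deletion_colouring[OF assms(1)])
  moreover have "bicolourings (digons A - {(u, v), (v, u)})
      \<subseteq> bicolourings (Restr (digons A) K - {(u, v), (v, u)})"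
    by (rule bicolourings_antimono) blast
  ultimately show "\<exists>h \<in> bicolourings (Restr (digons A) K - {(u, v), (v, u)}). h u = h v"
    by (intro bexI[where x = "\<lambda>w. c w = 1"]) auto
qed (use assms(4) in auto)

lemma same_side_no_transitive_triangle:
  assumes "three_dicritical V A" "bicolourings (digons A) \<noteq> {}"
    and "same_side A x y" "same_side A x z" "(x, y) \<in> A" "(x, z) \<in> A" "(z, y) \<in> A"
  shows False
proof -
  have "(y, x) \<notin> A" using not_digon_if_same_side[OF assms(2,3)] assms(5) unfolding digons_def by auto
  then obtain c where c: "is_2_dicolouring V (A - {(x, y)}) c" "c x = c y"
    "(\<lambda>v. c v = 1) \<in> bicolourings (digons A)"
    using simple_arc_deletion_colouring[OF assms(1,5)] by blast
  have V: "x \<in> V" "y \<in> V" "z \<in> V" and "z \<noteq> x" "z \<noteq> y"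
    using assms(5-7) three_dicriticalD(2,3)[OF assms(1)] by auto
  then have "c x = c z" using same_side_colour_eq[OF assms(4) c(3,1)] by blast
  then have "is_2_dicolouring V (insert (x, y) (A - {(x, y)})) c"
    using assms(6,7) c(2) V \<open>z \<noteq> x\<close> \<open>z \<noteq> y\<close>
    by (intro is_2_dicolouring_insert_shortcut[OF c(1), where z = z]) auto
  moreover have "insert (x, y) (A - {(x, y)}) = A" using assms(5) by blast
  ultimately show False
    using three_dicriticalD(4)[OF assms(1)] unfolding two_dicolourable_def by auto
qed

lemma simple_arcs_in_same_side_directed_triangle:
  assumes "three_dicritical V A" "same_side A x y" "same_side A x z"
    and "(x, y) \<in> A" "(y, z) \<in> A" "(z, x) \<in> A"
  shows "A \<subseteq> digons A \<union> {(x, y), (y, z), (z, x)}"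
proof
  fix e assume "e \<in> A"
  obtain a b where e: "e = (a, b)" by fastforce
  show "e \<in> digons A \<union> {(x, y), (y, z), (z, x)}"
  proof (rule ccontr)
    assume "e \<notin> digons A \<union> {(x, y), (y, z), (z, x)}"
    with \<open>e \<in> A\<close> e have "(a, b) \<in> A" "(b, a) \<notin> A" "(a, b) \<notin> {(x, y), (y, z), (z, x)}"
      unfolding digons_def by auto
    then obtain c where c: "is_2_dicolouring V (A - {(a, b)}) c" "(\<lambda>v. c v = 1) \<in> bicolourings (digons A)"
      using simple_arc_deletion_colouring[OF assms(1)] by blast
    have V: "x \<in> V" "y \<in> V" "z \<in> V" using assms(4-6) three_dicriticalD(2)[OF assms(1)] by auto
    let ?R = "induced_arcs (A - {(a, b)}) {v \<in> V. c v = c x}"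
    have "c x = c y" "c x = c z" using same_side_colour_eq[OF _ c(2,1)] assms(2,3) V by blast+
    then have "(x, y) \<in> ?R" "(y, z) \<in> ?R" "(z, x) \<in> ?R"
      using assms(4-6) V \<open>(a, b) \<notin> {(x, y), (y, z), (z, x)}\<close> unfolding induced_arcs_def by auto
    then have "\<not> acyclic ?R" unfolding acyclic_def by (meson r_into_trancl trancl_trans)
    moreover have "c x \<in> {1, 2}" using is_2_dicolouring_range[OF c(1) V(1)] by auto
    ultimately show False using c(1) unfolding is_2_dicolouring_def by blast
  qed
qed

section \<open>Counting arcs\<close>

lemma real_choose_two: "real (n choose 2) = real n * (real n - 1) / 2"
proof (induction n)
  case (Suc n)
  have "Suc n choose 2 = (n choose 1) + (n choose 2)" by (metis Suc_1 binomial_Suc_Suc)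
  with Suc show ?case by (simp add: field_simps)
qed simp

lemma real_arc_bound:
  assumes "6 * a \<le> n * (3 * n + 1)"
  shows "real a \<le> real (n choose 2) + 2 / 3 * real n"
proof -
  have "6 * real a \<le> real n * (3 * real n + 1)"
    using of_nat_mono[OF assms, where 'a = real] by (simp add: algebra_simps)
  moreover have "real (n choose 2) + 2 / 3 * real n = real n * (3 * real n + 1) / 6"
    by (simp add: real_choose_two field_simps)
  ultimately show ?thesis by linarith
qed

lemma digraph_iso_K3:
  assumes "distinct [x, y, z]"
  shows "digraph_iso {x, y, z} ({x, y, z} \<times> {x, y, z} - Id) K3_V K3_A"
proof -
  define f where "f v = (if v = x then 0 else if v = y then 1 else 2 :: nat)" for v
  have "bij_betw f {x, y, z} K3_V"
    using assms unfolding bij_betw_def inj_on_def K3_V_def f_def by auto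
  moreover have "\<forall>u \<in> {x, y, z}. \<forall>v \<in> {x, y, z}.
      (u, v) \<in> {x, y, z} \<times> {x, y, z} - Id \<longleftrightarrow> (f u, f v) \<in> K3_A"
    using assms unfolding K3_A_def K3_V_def f_def by auto
  ultimately show ?thesis unfolding digraph_iso_def by blast
qed

lemma digraph_iso_W3:
  assumes "distinct [x, y, z, w]"
  shows "digraph_iso {x, y, z, w}
    {(x, y), (y, z), (z, x), (w, x), (x, w), (w, y), (y, w), (w, z), (z, w)} W3_V W3_A"
proof -
  define f where "f v = (if v = x then 0 else if v = y then 1 else if v = z then 2 else 3 :: nat)" for v
  have "bij_betw f {x, y, z, w} W3_V"
    using assms unfolding bij_betw_def inj_on_def W3_V_def f_def by auto
  moreover have "\<forall>u \<in> {x, y, z, w}. \<forall>v \<in> {x, y, z, w}.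
      (u, v) \<in> {(x, y), (y, z), (z, x), (w, x), (x, w), (w, y), (y, w), (w, z), (z, w)}
        \<longleftrightarrow> (f u, f v) \<in> W3_A"
    using assms unfolding W3_A_def f_def by auto
  ultimately show ?thesis unfolding digraph_iso_def by blast
qed

lemma card_arcs_le_if_card_le_3:
  assumes "is_digraph V A" "card V \<le> 3" "\<not> digraph_iso V A K3_V K3_A"
  shows "6 * card A \<le> card V * (3 * card V + 1)"
proof -
  have "finite V" "A \<subseteq> V \<times> V - Id" using assms(1) unfolding is_digraph_def by auto
  then have card_A: "card A \<le> card V * card V - card V"
    using card_offdiag[of V] card_mono[of "V \<times> V - Id" A] by simp
  consider "card V = 0 \<or> card V = 1 \<or> card V = 2" | "card V = 3" using assms(2) by linarith
  then show ?thesis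
  proof cases
    case 1
    then show ?thesis using card_A by auto
  next
    case 2
    then obtain x y z where V: "V = {x, y, z}" "distinct [x, y, z]" by (auto simp: card_3_iff)
    then have "A \<noteq> V \<times> V - Id" using assms(3) digraph_iso_K3 by metis
    then have "card A < card (V \<times> V - Id)"
      using \<open>A \<subseteq> V \<times> V - Id\<close> \<open>finite V\<close> by (intro psubset_card_mono) auto
    then show ?thesis using card_offdiag[OF \<open>finite V\<close>] 2 by simp
  qed
qed

lemma four_mult_le_square: "4 * x * y \<le> (x + y)\<^sup>2" for x y :: nat
proof -
  have "int (4 * x * y) \<le> int ((x + y)\<^sup>2)"
    using zero_le_power2[of "int x - int y"] by (simp add: power2_eq_square algebra_simps)
  then show ?thesis by (simp only: of_nat_le_iff)
qed

lemma card_digons_delete_vertex_le: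
  assumes "three_dicritical V A" "v \<in> V"
  shows "2 * card (Restr (digons A) (V - {v})) \<le> (card V - 1)\<^sup>2"
proof -
  obtain c where c: "is_2_dicolouring (V - {v}) (Restr A (V - {v})) c"
    using three_dicritical_delete_vertex[OF assms] unfolding two_dicolourable_def by blast
  define X Y where "X = {w \<in> V - {v}. c w = 1}" and "Y = {w \<in> V - {v}. c w \<noteq> 1}"
  have "finite V" using three_dicriticalD(1)[OF assms(1)] .
  have "(a, b) \<in> X \<times> Y \<union> Y \<times> X" if "(a, b) \<in> Restr (digons A) (V - {v})" for a b
  proof -
    from that have "(a, b) \<in> digons A" "a \<in> V - {v}" "b \<in> V - {v}" by auto
    then have "c a \<noteq> c b" using is_2_dicolouring_digon[OF c] unfolding digons_def by auto
    then show "(a, b) \<in> X \<times> Y \<union> Y \<times> X"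
      using \<open>a \<in> V - {v}\<close> \<open>b \<in> V - {v}\<close> is_2_dicolouring_range[OF c \<open>a \<in> V - {v}\<close>]
        is_2_dicolouring_range[OF c \<open>b \<in> V - {v}\<close>]
      unfolding X_def Y_def by auto
  qed
  then have "Restr (digons A) (V - {v}) \<subseteq> X \<times> Y \<union> Y \<times> X" by (rule subrelI)
  moreover have "finite X" "finite Y"
    using \<open>finite V\<close> finite_subset[of X V] finite_subset[of Y V] unfolding X_def Y_def by auto
  ultimately have "card (Restr (digons A) (V - {v})) \<le> card (X \<times> Y \<union> Y \<times> X)"
    by (intro card_mono) auto
  also have "\<dots> \<le> 2 * card X * card Y"
    using card_Un_le[of "X \<times> Y" "Y \<times> X"] by (simp add: card_cartesian_product algebra_simps)
  finally have "2 * card (Restr (digons A) (V - {v})) \<le> 4 * card X * card Y" by simp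
  also have "\<dots> \<le> (card X + card Y)\<^sup>2" by (rule four_mult_le_square)
  also have "card X + card Y = card (X \<union> Y)"
    using \<open>finite X\<close> \<open>finite Y\<close> by (intro card_Un_disjoint[symmetric]) (auto simp: X_def Y_def)
  also have "X \<union> Y = V - {v}" unfolding X_def Y_def by auto
  finally show ?thesis using \<open>finite V\<close> assms(2) by simp
qed

text \<open>The floor in \<open>(n - 1)\<^sup>2 div 2\<close> is what makes the case \<open>n = 4\<close> work.\<close>
lemma vertex_deletion_count_arith:
  fixes n a :: nat
  assumes "(n - 2) * a \<le> n * ((n - 1)\<^sup>2 div 2)" "4 \<le> n"
  shows "6 * a \<le> n * (3 * n + 1)"
proof (cases "n = 4")
  case True
  then show ?thesis using assms(1) by simp
next
  case False
  define m where "m = n - 5"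
  with False assms(2) have n: "n = m + 5" by simp
  have "(n - 2) * (6 * a) \<le> 3 * n * (2 * ((n - 1)\<^sup>2 div 2))" using assms(1) by simp
  also have "\<dots> \<le> 3 * n * (n - 1)\<^sup>2" by (intro mult_le_mono2) simp
  also have "\<dots> \<le> (n - 2) * (n * (3 * n + 1))"
    unfolding n by (simp add: power2_eq_square algebra_simps)
  finally show ?thesis unfolding n by simp
qed

lemma card_arcs_le_if_digon_graph_not_bipartite:
  assumes "three_dicritical V A" "bicolourings (digons A) = {}" "4 \<le> card V"
  shows "6 * card A \<le> card V * (3 * card V + 1)"
proof -
  have "digons A = A" using digons_eq_if_not_bipartite[OF assms(1,2)] .
  have "(card V - 2) * card A = (\<Sum>v\<in>V. card (Restr A (V - {v})))"
    using three_dicriticalD(1-3)[OF assms(1)] by (intro sum_card_Restr_delete[symmetric]) auto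
  also have "\<dots> \<le> (\<Sum>v\<in>V. (card V - 1)\<^sup>2 div 2)"
    using card_digons_delete_vertex_le[OF assms(1)] \<open>digons A = A\<close>
    by (intro sum_mono) (simp add: less_eq_div_iff_mult_less_eq mult.commute)
  also have "\<dots> = card V * ((card V - 1)\<^sup>2 div 2)" by simp
  finally show ?thesis using assms(3) by (rule vertex_deletion_count_arith)
qed

lemma no_digon_within_same_side:
  assumes "bicolourings (digons A) \<noteq> {}" "same_side A x a" "same_side A x b"
  shows "(a, b) \<notin> digons A"
  using not_digon_if_same_side[OF assms(1)] same_side_iff(1)[OF assms(2)] assms(3) by blast

lemma card_arcs_le_card_digons_add_3:
  assumes "three_dicritical V A" "same_side A x y" "same_side A x z"
    and "(x, y) \<in> A" "(y, z) \<in> A" "(z, x) \<in> A"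
  shows "card A \<le> card (digons A) + 3"
proof -
  have "finite V" "A \<subseteq> V \<times> V" using three_dicriticalD[OF assms(1)] by auto
  then have "finite A" using finite_subset finite_cartesian_product by blast
  have "card A \<le> card (digons A \<union> {(x, y), (y, z), (z, x)})"
    using simple_arcs_in_same_side_directed_triangle[OF assms] \<open>finite A\<close>
    by (intro card_mono) (auto simp: digons_def)
  also have "\<dots> \<le> card (digons A) + 3"
    using card_Un_le[of "digons A" "{(x, y), (y, z), (z, x)}"] card_length[of "[(x, y), (y, z), (z, x)]"]
    by simp
  finally show ?thesis .
qed

lemma card_arcs_le_8_if_same_side_directed_triangle:
  assumes "three_dicritical V A" "bicolourings (digons A) \<noteq> {}" "\<not> digraph_iso V A W3_V W3_A"
    and "card V = 4" "same_side A x y" "same_side A x z" "(x, y) \<in> A" "(y, z) \<in> A" "(z, x) \<in> A"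
  shows "card A \<le> 8"
proof -
  have "finite V" "A \<subseteq> V \<times> V" using three_dicriticalD[OF assms(1)] by auto
  have "distinct [x, y, z]" "{x, y, z} \<subseteq> V"
    using assms(7-9) \<open>A \<subseteq> V \<times> V\<close> three_dicriticalD(3)[OF assms(1)] by auto
  then have "card (V - {x, y, z}) = 1" using assms(4) \<open>finite V\<close> by (simp add: card_Diff_subset)
  then obtain w where "V - {x, y, z} = {w}" by (auto simp: card_1_singleton_iff)
  then have V: "V = {x, y, z, w}" "distinct [x, y, z, w]"
    using \<open>{x, y, z} \<subseteq> V\<close> \<open>distinct [x, y, z]\<close> by auto
  let ?W = "{(x, y), (y, z), (z, x), (w, x), (x, w), (w, y), (y, w), (w, z), (z, w)}"
  have "(a, b) \<in> ?W" if "(a, b) \<in> digons A" for a b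
  proof -
    have "a \<in> V" "b \<in> V" "a \<noteq> b"
      using that \<open>A \<subseteq> V \<times> V\<close> three_dicriticalD(3)[OF assms(1)] unfolding digons_def by auto
    moreover have "same_side A x u" if "u \<in> {x, y, z}" for u using that assms(5,6) by auto
    then have "\<not> (a \<in> {x, y, z} \<and> b \<in> {x, y, z})"
      using no_digon_within_same_side[OF assms(2)] that by blast
    ultimately show ?thesis using V(1) by auto
  qed
  then have "digons A \<subseteq> ?W" by (rule subrelI)
  then have "digons A \<union> {(x, y), (y, z), (z, x)} \<subseteq> ?W" by auto
  with simple_arcs_in_same_side_directed_triangle[OF assms(1,5-9)] have "A \<subseteq> ?W"
    by (rule order_trans)
  moreover have "A \<noteq> ?W"
  proof
    assume "A = ?W"
    with digraph_iso_W3[OF V(2)] V(1) assms(3) show False by simp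
  qed
  ultimately have "card A < card ?W" by (intro psubset_card_mono) auto
  moreover have "card ?W \<le> 9"
    using card_length[of "[(x, y), (y, z), (z, x), (w, x), (x, w), (w, y), (y, w), (w, z), (z, w)]"]
    by simp
  ultimately show ?thesis by simp
qed

lemma card_arcs_le_if_same_side_directed_triangle:
  assumes "three_dicritical V A" "bicolourings (digons A) \<noteq> {}" "\<not> digraph_iso V A W3_V W3_A"
    and "4 \<le> card V" "same_side A x y" "same_side A x z" "(x, y) \<in> A" "(y, z) \<in> A" "(z, x) \<in> A"
  shows "6 * card A \<le> card V * (3 * card V + 1)"
proof (cases "card V = 4")
  case True
  with card_arcs_le_8_if_same_side_directed_triangle[OF assms(1-3) _ assms(5-9)] show ?thesis
    by simp
next
  case False
  have "A \<subseteq> V \<times> V" using three_dicriticalD(2)[OF assms(1)] .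
  then have "Restr (digons A) V = digons A" unfolding digons_def by auto
  then have "card (digons A) + 2 \<le> 2 * card V"
    using card_digons_le[OF assms(1,2), of V] assms(7) \<open>A \<subseteq> V \<times> V\<close> by auto
  then have "card A \<le> 2 * card V + 1"
    using card_arcs_le_card_digons_add_3[OF assms(1,5-9)] by linarith
  moreover define m where "m = card V - 5"
  with False assms(4) have "card V = m + 5" by simp
  ultimately show ?thesis by (simp add: algebra_simps)
qed

definition linked_class :: "'a set \<Rightarrow> ('a \<times> 'a) set \<Rightarrow> 'a \<Rightarrow> 'a set" where
  "linked_class V A x = {y \<in> V. same_side A x y \<or> opposite_sides A x y}"

lemma linked_class_self: "x \<in> V \<Longrightarrow> x \<in> linked_class V A x"
  unfolding linked_class_def same_side_def by simp

lemma linked_class_subset: "linked_class V A x \<subseteq> V"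
  unfolding linked_class_def by blast

lemma linked_class_eq:
  assumes "y \<in> linked_class V A x"
  shows "linked_class V A y = linked_class V A x"
proof -
  from assms have "same_side A x y \<or> opposite_sides A x y" unfolding linked_class_def by blast
  then show ?thesis
  proof
    assume "same_side A x y"
    from same_side_iff[OF this] show ?thesis unfolding linked_class_def by simp
  next
    assume "opposite_sides A x y"
    from opposite_sides_iff[OF this] show ?thesis unfolding linked_class_def by auto
  qed
qed

lemma linked_class_sym:
  assumes "x \<in> V" "y \<in> linked_class V A x"
  shows "x \<in> linked_class V A y"
  using linked_class_eq[OF assms(2)] linked_class_self[OF assms(1)] by simp

definition same_side_directed_triangle :: "('a \<times> 'a) set \<Rightarrow> bool" where
  "same_side_directed_triangle A \<longleftrightarrow> (\<exists>x y z. same_side A x y \<and> same_side A x z \<and>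
    (x, y) \<in> A \<and> (y, z) \<in> A \<and> (z, x) \<in> A)"

lemma card_arcs_within_same_side_le:
  assumes "three_dicritical V A" "bicolourings (digons A) \<noteq> {}"
    and no_cycle: "\<not> same_side_directed_triangle A"
    and "S \<subseteq> V" "\<And>a b. a \<in> S \<Longrightarrow> b \<in> S \<Longrightarrow> same_side A a b"
  shows "6 * card (Restr A S) + 5 * card S \<le> 3 * card S * card S + 4"
proof (rule card_triangle_free_asym_le)
  show "finite S" using three_dicriticalD(1)[OF assms(1)] assms(4) finite_subset by blast
  show "asym (Restr A S)"
    using not_digon_if_same_side[OF assms(2) assms(5)] unfolding digons_def by (auto simp: asym_iff)
  have cyclic: "False" if "a \<in> S" "b \<in> S" "c \<in> S" "(a, b) \<in> A" "(b, c) \<in> A" "(c, a) \<in> A" for a b c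
    using no_cycle assms(5)[of a b] assms(5)[of a c] that
    unfolding same_side_directed_triangle_def by blast
  have transitive: "False" if "a \<in> S" "b \<in> S" "c \<in> S" "(a, b) \<in> A" "(a, c) \<in> A" "(c, b) \<in> A" for a b c
    using same_side_no_transitive_triangle[OF assms(1,2) assms(5)[of a b] assms(5)[of a c]] that by blast
  fix x y z
  assume "(x, y) \<in> Restr A S \<union> (Restr A S)\<inverse>" "(y, z) \<in> Restr A S \<union> (Restr A S)\<inverse>"
    "(x, z) \<in> Restr A S \<union> (Restr A S)\<inverse>"
  then show False using cyclic transitive by blast
qed auto

lemma linked_class_count_arith:
  fixes p q r s e :: nat
  assumes "1 \<le> p" "6 * r + 5 * p \<le> 3 * p * p + 4" "6 * s + 5 * q \<le> 3 * q * q + 4"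
    and "e + 2 \<le> 2 * (p + q)" "e \<le> 2 * p * q"
  shows "6 * (r + s + e) \<le> (p + q) * (3 * (p + q) + 1)"
proof -
  consider "q \<le> 1" | "p = 1" "2 \<le> q" | "2 \<le> p" "2 \<le> q" using assms(1) by linarith
  then show ?thesis
  proof cases
    case 1
    then have "s = 0" using assms(3) by (auto simp: le_Suc_eq)
    with 1 show ?thesis using assms(1,2,5) by (auto simp: le_Suc_eq algebra_simps)
  next
    case 2
    then have "r = 0" using assms(2) by arith
    with 2 show ?thesis using assms(3-5) by (simp add: algebra_simps)
  next
    case 3
    then obtain p' q' where "p = p' + 2" "q = q' + 2" by (metis add.commute le_Suc_ex)
    then have "2 * p + 2 * q \<le> p * q + 4" by (simp add: algebra_simps)
    then show ?thesis using 3 assms(2-5) by (simp add: algebra_simps; linarith)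
  qed
qed

lemma linked_class_sides:
  assumes "three_dicritical V A" "bicolourings (digons A) \<noteq> {}" "x \<in> V"
  defines "P \<equiv> {y \<in> V. same_side A x y}" and "Q \<equiv> {y \<in> V. opposite_sides A x y}"
    and "K \<equiv> linked_class V A x"
  shows "K = P \<union> Q" "P \<inter> Q = {}"
    and "Restr A K \<subseteq> Restr A P \<union> Restr A Q \<union> Restr (digons A) K"
    and "Restr (digons A) K \<subseteq> P \<times> Q \<union> Q \<times> P"
proof -
  show K: "K = P \<union> Q" unfolding K_def linked_class_def P_def Q_def by auto
  show "P \<inter> Q = {}"
    using not_opposite_sides_if_same_side[OF assms(2)] unfolding P_def Q_def by blast
  have digon_PQ: "(a, b) \<in> digons A" if "(a, b) \<in> A" "a \<in> P \<and> b \<in> Q \<or> a \<in> Q \<and> b \<in> P" for a b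
    using that(2) digon_if_opposite_sides[OF assms(1) that(1)]
      same_side_iff(2)[of A x a b] opposite_sides_iff(1)[of A x a b]
    unfolding P_def Q_def by auto
  have "(a, b) \<in> Restr A P \<union> Restr A Q \<union> Restr (digons A) K" if "(a, b) \<in> Restr A K" for a b
    using that digon_PQ[of a b] K by auto
  then show "Restr A K \<subseteq> Restr A P \<union> Restr A Q \<union> Restr (digons A) K" by (rule subrelI)
  have "\<not> (a \<in> P \<and> b \<in> P)" "\<not> (a \<in> Q \<and> b \<in> Q)" if "(a, b) \<in> digons A" for a b
    using that not_digon_if_same_side[OF assms(2)] same_side_iff(1)[of A x a b]
      opposite_sides_iff(2)[of A x a b]
    unfolding P_def Q_def by auto
  then have "(a, b) \<in> P \<times> Q \<union> Q \<times> P" if "(a, b) \<in> Restr (digons A) K" for a b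
    using that K by blast
  then show "Restr (digons A) K \<subseteq> P \<times> Q \<union> Q \<times> P" by (rule subrelI)
qed

lemma card_arcs_within_linked_class_le:
  assumes "three_dicritical V A" "bicolourings (digons A) \<noteq> {}"
    and "\<not> same_side_directed_triangle A"
    and "x \<in> V"
  defines "K \<equiv> linked_class V A x"
  shows "6 * card (Restr A K) \<le> card K * (3 * card K + 1)"
proof -
  define P Q where "P = {y \<in> V. same_side A x y}" and "Q = {y \<in> V. opposite_sides A x y}"
  note sides = linked_class_sides[OF assms(1,2,4), folded P_def Q_def K_def]
  have "finite V" using three_dicriticalD(1)[OF assms(1)] .
  then have fin: "finite P" "finite Q" unfolding P_def Q_def by simp_all
  have "card (Restr A K) \<le> card (Restr A P \<union> Restr A Q \<union> Restr (digons A) K)"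
    using fin sides(1) by (intro card_mono[OF _ sides(3)] finite_UnI finite_Int[OF disjI2]) auto
  also have "\<dots> \<le> card (Restr A P) + card (Restr A Q) + card (Restr (digons A) K)"
    by (rule order_trans[OF card_Un_le add_right_mono[OF card_Un_le]])
  finally have card_K: "card (Restr A K) \<le> card (Restr A P) + card (Restr A Q) + card (Restr (digons A) K)" .
  have "card (Restr (digons A) K) \<le> card (P \<times> Q \<union> Q \<times> P)"
    using fin by (intro card_mono[OF _ sides(4)] finite_UnI finite_cartesian_product)
  also have "\<dots> \<le> 2 * card P * card Q"
    using card_Un_le[of "P \<times> Q" "Q \<times> P"] by (simp add: card_cartesian_product algebra_simps)
  finally have digons_PQ: "card (Restr (digons A) K) \<le> 2 * card P * card Q" .
  have card_PQ: "card K = card P + card Q" using sides(1,2) fin by (simp add: card_Un_disjoint)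
  have "x \<in> P" using assms(4) unfolding P_def by simp
  have "K \<subseteq> V" unfolding K_def by (rule linked_class_subset)
  moreover have "K \<noteq> {}" using \<open>x \<in> P\<close> sides(1) by auto
  ultimately have "card (Restr (digons A) K) + 2 \<le> 2 * card K" by (rule card_digons_le[OF assms(1,2)])
  then have forest: "card (Restr (digons A) K) + 2 \<le> 2 * (card P + card Q)" unfolding card_PQ .
  have "card P \<ge> 1" using \<open>x \<in> P\<close> fin(1) by (simp add: Suc_le_eq card_gt_0_iff) blast
  moreover have "6 * card (Restr A P) + 5 * card P \<le> 3 * card P * card P + 4"
    using same_side_iff(1)[of A x] unfolding P_def
    by (intro card_arcs_within_same_side_le[OF assms(1-3)]) auto
  moreover have "6 * card (Restr A Q) + 5 * card Q \<le> 3 * card Q * card Q + 4"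
    using opposite_sides_iff(2)[of A x] unfolding Q_def
    by (intro card_arcs_within_same_side_le[OF assms(1-3)]) auto
  ultimately have count: "6 * (card (Restr A P) + card (Restr A Q) + card (Restr (digons A) K))
      \<le> (card P + card Q) * (3 * (card P + card Q) + 1)"
    using forest digons_PQ by (rule linked_class_count_arith)
  from card_K have "6 * card (Restr A K)
      \<le> 6 * (card (Restr A P) + card (Restr A Q) + card (Restr (digons A) K))" by simp
  also note count
  finally show ?thesis unfolding card_PQ .
qed

lemma card_arcs_between_linked_classes_le:
  assumes "three_dicritical V A"
  shows "2 * card (A \<inter> Sigma V (\<lambda>x. V - linked_class V A x))
    \<le> (\<Sum>x\<in>V. card V - card (linked_class V A x))"
proof -
  let ?C = "Sigma V (\<lambda>x. V - linked_class V A x)"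
  have "finite V" using three_dicriticalD(1)[OF assms] .
  then have finite_class: "finite (linked_class V A x)" for x
    by (rule finite_subset[OF linked_class_subset])
  have "sym ?C"
  proof (rule symI)
    fix a b assume "(a, b) \<in> ?C"
    then have "a \<in> V" "b \<in> V" "b \<notin> linked_class V A a" by auto
    then show "(b, a) \<in> ?C" using linked_class_sym[OF \<open>b \<in> V\<close>, of a A] by auto
  qed
  moreover have "asym (A \<inter> ?C)"
  proof (intro asymI notI)
    fix x y assume "(x, y) \<in> A \<inter> ?C" "(y, x) \<in> A \<inter> ?C"
    then have "opposite_sides A x y" "x \<in> V" "y \<in> V" "y \<notin> linked_class V A x"
      using opposite_sides_if_digon[of x y A] unfolding digons_def by auto
    then show False unfolding linked_class_def by blast
  qed
  ultimately have "2 * card ((A \<inter> ?C) \<inter> ?C) \<le> card ?C"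
    using \<open>finite V\<close> by (intro card_Int_sym_le_half) auto
  also have "card ?C = (\<Sum>x\<in>V. card (V - linked_class V A x))" using \<open>finite V\<close> by simp
  also have "\<dots> = (\<Sum>x\<in>V. card V - card (linked_class V A x))"
    by (intro sum.cong refl card_Diff_subset finite_class linked_class_subset)
  finally show ?thesis by (simp add: Int_absorb2)
qed

lemma card_arcs_within_linked_classes_le:
  assumes "three_dicritical V A" "bicolourings (digons A) \<noteq> {}"
    and "\<not> same_side_directed_triangle A"
  shows "real (card (A \<inter> Sigma V (linked_class V A)))
    \<le> (\<Sum>x\<in>V. (3 * real (card (linked_class V A x)) + 1) / 6)"
proof -
  let ?K = "linked_class V A"
  let ?out = "\<lambda>x. real (card {y \<in> ?K x. (x, y) \<in> A})"
  have "finite V" using three_dicriticalD(1)[OF assms(1)] .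
  have "{y \<in> ?K x. (x, y) \<in> A} \<subseteq> V" for x using linked_class_subset[of V A x] by blast
  then have "finite {y \<in> ?K x. (x, y) \<in> A}" for x using \<open>finite V\<close> finite_subset by blast
  moreover have "A \<inter> Sigma V ?K = Sigma V (\<lambda>x. {y \<in> ?K x. (x, y) \<in> A})" by auto
  ultimately have "real (card (A \<inter> Sigma V ?K)) = (\<Sum>x\<in>V. ?out x)"
    using \<open>finite V\<close> by simp
  also have "\<dots> = (\<Sum>x\<in>V. (\<Sum>y\<in>?K x. ?out y) / card (?K x))"
    using \<open>finite V\<close> linked_class_self linked_class_subset linked_class_eq
    by (rule sum_eq_sum_block_averages)
  also have "\<dots> \<le> (\<Sum>x\<in>V. (3 * real (card (?K x)) + 1) / 6)"
  proof (rule sum_mono)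
    fix x assume "x \<in> V"
    have "finite (?K x)" using \<open>finite V\<close> by (rule finite_subset[OF linked_class_subset])
    have "(\<Sum>y\<in>?K x. ?out y) = (\<Sum>y\<in>?K x. real (card {z \<in> ?K x. (y, z) \<in> A}))"
    proof (rule sum.cong[OF refl])
      fix y assume "y \<in> ?K x"
      show "?out y = real (card {z \<in> ?K x. (y, z) \<in> A})"
        by (simp only: linked_class_eq[OF \<open>y \<in> ?K x\<close>])
    qed
    also have "\<dots> = real (card (Restr A (?K x)))"
    proof -
      have "Restr A (?K x) = Sigma (?K x) (\<lambda>y. {z \<in> ?K x. (y, z) \<in> A})" by auto
      then show ?thesis using \<open>finite (?K x)\<close> by simp
    qed
    finally have "6 * (\<Sum>y\<in>?K x. ?out y) \<le> real (card (?K x)) * (3 * real (card (?K x)) + 1)"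
      using of_nat_mono[OF card_arcs_within_linked_class_le[OF assms \<open>x \<in> V\<close>], where 'a = real]
      by (simp add: algebra_simps)
    moreover have "0 < real (card (?K x))"
      using linked_class_self[OF \<open>x \<in> V\<close>] \<open>finite (?K x)\<close> card_gt_0_iff by fastforce
    ultimately show "(\<Sum>y\<in>?K x. ?out y) / card (?K x) \<le> (3 * real (card (?K x)) + 1) / 6"
      by (simp add: pos_divide_le_eq mult.commute)
  qed
  finally show ?thesis .
qed

lemma card_arcs_le_if_no_same_side_directed_triangle:
  assumes "three_dicritical V A" "bicolourings (digons A) \<noteq> {}"
    and "\<not> same_side_directed_triangle A"
  shows "6 * card A \<le> card V * (3 * card V + 1)"
proof -
  let ?K = "linked_class V A"
  let ?n = "card V"
  have "finite V" "A \<subseteq> V \<times> V" using three_dicriticalD[OF assms(1)] by auto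
  then have "finite A" using finite_subset finite_cartesian_product by blast
  have "A = (A \<inter> Sigma V ?K) \<union> (A \<inter> Sigma V (\<lambda>x. V - ?K x))"
    "(A \<inter> Sigma V ?K) \<inter> (A \<inter> Sigma V (\<lambda>x. V - ?K x)) = {}"
    using \<open>A \<subseteq> V \<times> V\<close> by auto
  then have card_A: "card A = card (A \<inter> Sigma V ?K) + card (A \<inter> Sigma V (\<lambda>x. V - ?K x))"
    using \<open>finite A\<close> by (metis card_Un_disjoint finite_Int)
  have "card (?K x) \<le> ?n" for x using card_mono[OF \<open>finite V\<close> linked_class_subset] .
  then have "2 * real (card (A \<inter> Sigma V (\<lambda>x. V - ?K x))) \<le> (\<Sum>x\<in>V. real ?n - real (card (?K x)))"
    using of_nat_mono[OF card_arcs_between_linked_classes_le[OF assms(1)], where 'a = real]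
    by (simp add: of_nat_diff)
  moreover have "real (card (A \<inter> Sigma V ?K)) \<le> (\<Sum>x\<in>V. (3 * real (card (?K x)) + 1) / 6)"
    by (rule card_arcs_within_linked_classes_le[OF assms])
  moreover have "real (card A) = real (card (A \<inter> Sigma V ?K)) + real (card (A \<inter> Sigma V (\<lambda>x. V - ?K x)))"
    using card_A by simp
  ultimately have "real (card A) \<le> (\<Sum>x\<in>V. (3 * real (card (?K x)) + 1) / 6)
      + (\<Sum>x\<in>V. real ?n - real (card (?K x))) / 2"
    by linarith
  also have "\<dots> = (\<Sum>x\<in>V. (3 * real (card (?K x)) + 1) / 6 + (real ?n - real (card (?K x))) / 2)"
    by (simp add: sum_divide_distrib sum.distrib)
  also have "\<dots> = (\<Sum>x\<in>V. (3 * real ?n + 1) / 6)"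
    by (intro sum.cong refl) (simp add: field_simps)
  finally have "real (6 * card A) \<le> real (?n * (3 * ?n + 1))" by (simp add: algebra_simps)
  then show ?thesis by (rule of_nat_le_iff[THEN iffD1])
qed

theorem theorem12:
  fixes V :: "'a set" and A :: "('a \<times> 'a) set"
  assumes "three_dicritical V A"
    and "\<not> digraph_iso V A K3_V K3_A"
    and "\<not> digraph_iso V A W3_V W3_A"
  shows "real (card A) \<le> real (card V choose 2) + 2 / 3 * real (card V)"
proof (rule real_arc_bound)
  show "6 * card A \<le> card V * (3 * card V + 1)"
  proof (cases "card V \<le> 3")
    case True
    with assms(1,2) show ?thesis
      unfolding three_dicritical_def by (blast intro: card_arcs_le_if_card_le_3)
  next
    case False
    show ?thesis
    proof (cases "bicolourings (digons A) = {}")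
      case True
      with assms(1) False show ?thesis by (intro card_arcs_le_if_digon_graph_not_bipartite) auto
    next
      case bipartite: False
      show ?thesis
      proof (cases "same_side_directed_triangle A")
        case True
        then obtain x y z where triangle: "same_side A x y" "same_side A x z"
          "(x, y) \<in> A" "(y, z) \<in> A" "(z, x) \<in> A"
          unfolding same_side_directed_triangle_def by blast
        from \<open>\<not> card V \<le> 3\<close> show ?thesis
          by (intro card_arcs_le_if_same_side_directed_triangle[OF assms(1) bipartite assms(3) _ triangle])
            simp
      next
        case False
        with assms(1) bipartite show ?thesis by (rule card_arcs_le_if_no_same_side_directed_triangle)
      qed
    qed
  qed
qed

end
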